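(* Let $\mathbb{K}$ be an algebraically closed field. Every triangular dual $3$-net in $PG(2,\mathbb{K})$ realizes a cyclic group which is isomorphic to a (finite) subgroup of the multiplicative group $\mathbb{K}^*$.
   Context: A dual $3$-net of order $n$ in $PG(2,\mathbb{K})$ is a triple $(\Lambda_1,\Lambda_2,\Lambda_3)$ of pairwise disjoint point sets, each of size $n$, such that every line meeting two distinct components meets each component in exactly one point. It realizes a group $(G,\cdot)$ if there are bijections $\alpha:G\to\Lambda_1$, $\beta:G\to\Lambda_2$, $\gamma:G\to\Lambda_3$ such that $a\cdot b=c$ if and only if $\alpha(a),\beta(b),\gamma(c)$ are collinear. A dual $3$-net of order $n\ge4$ is triangular if its three components lie respectively on the three sides of a triangle. *)

theory Defs
  imports "HOL-Computational_Algebra.Polynomial" "HOL-Algebra.Elementary_Groups"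
begin

type_synonym 'a vec3 = "'a \<times> 'a \<times> 'a"

definition smult3 :: "'a::field \<Rightarrow> 'a vec3 \<Rightarrow> 'a vec3" where
  "smult3 c v = (case v of (x, y, z) \<Rightarrow> (c * x, c * y, c * z))"

definition dot3 :: "'a::field vec3 \<Rightarrow> 'a vec3 \<Rightarrow> 'a" where
  "dot3 u v = (case u of (a, b, c) \<Rightarrow> case v of (x, y, z) \<Rightarrow> a * x + b * y + c * z)"

definition ppoint :: "'a::field vec3 \<Rightarrow> 'a vec3 set" where
  "ppoint v = {smult3 c v | c. c \<noteq> 0}"

definition PG2 :: "'a::field vec3 set set" where
  "PG2 = {ppoint v | v. v \<noteq> (0, 0, 0)}"

definition pline :: "'a::field vec3 \<Rightarrow> 'a vec3 set set" where
  "pline a = {P \<in> PG2. \<forall>v \<in> P. dot3 a v = 0}"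

definition Lines :: "'a::field vec3 set set set" where
  "Lines = {pline a | a. a \<noteq> (0, 0, 0)}"

definition collinear3 :: "'a::field vec3 set \<Rightarrow> 'a vec3 set \<Rightarrow> 'a vec3 set \<Rightarrow> bool" where
  "collinear3 P Q R \<longleftrightarrow> (\<exists>l \<in> Lines. P \<in> l \<and> Q \<in> l \<and> R \<in> l)"

definition dual_3net :: "'a::field vec3 set set \<Rightarrow> 'a vec3 set set \<Rightarrow> 'a vec3 set set \<Rightarrow> nat \<Rightarrow> bool" where
  "dual_3net L1 L2 L3 n \<longleftrightarrow>
     (let \<Lambda> = [L1, L2, L3] in
       (\<forall>i < 3. \<Lambda> ! i \<subseteq> PG2 \<and> finite (\<Lambda> ! i) \<and> card (\<Lambda> ! i) = n) \<and>
       (\<forall>i < 3. \<forall>j < 3. i \<noteq> j \<longrightarrow> \<Lambda> ! i \<inter> \<Lambda> ! j = {}) \<and>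
       (\<forall>l \<in> Lines. \<forall>i < 3. \<forall>j < 3.
          i \<noteq> j \<and> l \<inter> \<Lambda> ! i \<noteq> {} \<and> l \<inter> \<Lambda> ! j \<noteq> {} \<longrightarrow>
          (\<forall>k < 3. \<exists>!P. P \<in> l \<inter> \<Lambda> ! k)))"

definition triangular_dual_3net :: "'a::field vec3 set set \<Rightarrow> 'a vec3 set set \<Rightarrow> 'a vec3 set set \<Rightarrow> nat \<Rightarrow> bool" where
  "triangular_dual_3net L1 L2 L3 n \<longleftrightarrow> dual_3net L1 L2 L3 n \<and> n \<ge> 4 \<and>
     (\<exists>l1 \<in> Lines. \<exists>l2 \<in> Lines. \<exists>l3 \<in> Lines.
        l1 \<noteq> l2 \<and> l1 \<noteq> l3 \<and> l2 \<noteq> l3 \<and> l1 \<inter> l2 \<inter> l3 = {} \<and>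
        L1 \<subseteq> l1 \<and> L2 \<subseteq> l2 \<and> L3 \<subseteq> l3)"

definition realizes :: "'a::field vec3 set set \<Rightarrow> 'a vec3 set set \<Rightarrow> 'a vec3 set set \<Rightarrow> ('g, 'b) monoid_scheme \<Rightarrow> bool" where
  "realizes L1 L2 L3 G \<longleftrightarrow> group G \<and>
     (\<exists>\<alpha> \<beta> \<gamma>. bij_betw \<alpha> (carrier G) L1 \<and> bij_betw \<beta> (carrier G) L2 \<and> bij_betw \<gamma> (carrier G) L3 \<and>
        (\<forall>a \<in> carrier G. \<forall>b \<in> carrier G. \<forall>c \<in> carrier G.
           a \<otimes>\<^bsub>G\<^esub> b = c \<longleftrightarrow> collinear3 (\<alpha> a) (\<beta> b) (\<gamma> c)))"

definition Kstar :: "'a::field monoid" where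
  "Kstar = \<lparr>carrier = UNIV - {0}, mult = (*), one = 1\<rparr>"

end

theory Submission
  imports Defs "HOL-Algebra.Multiplicative_Group"
begin

text \<open>Take the sides of the triangle as coordinate lines. A point of the component on the
  \<open>i\<close>-th side has \<open>i\<close>-th coordinate zero and the other two nonzero, and the ratio of the
  latter is a coordinate \<open>f\<^sub>i\<close> in \<open>K\<^sup>*\<close>; a determinant (Menelaus) computation shows that
  points \<open>P, Q, R\<close>, one from each side, are collinear iff \<open>f\<^sub>1 P \<cdot> f\<^sub>2 Q = f\<^sub>3 R\<close>.
  Since the line through a point of the first and a point of the second component meets the
  third, the three coordinate sets \<open>X, Y, Z\<close> have equal finite size and \<open>X Y \<subseteq> Z\<close>. This
  forces them to be cosets \<open>x\<^sub>0 H, y\<^sub>0 H, x\<^sub>0 y\<^sub>0 H\<close> of a finite subgroup \<open>H\<close> of \<open>K\<^sup>*\<close>,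
  which the net then realizes. Finite subgroups of \<open>K\<^sup>*\<close> are cyclic because \<open>x\<^sup>d = 1\<close> has
  at most \<open>d\<close> roots.\<close>

context group
begin

lemma card_ord_eq_phi'_if_card_roots_le:
  assumes fin: "finite (carrier G)" and a: "a \<in> carrier G" "ord a = d"
    and roots: "card {x \<in> carrier G. x [^] d = \<one>} \<le> d"
  shows "card {x \<in> carrier G. ord x = d} = phi' d"
proof -
  have powers: "(\<lambda>k. a [^] k) ` {1..d} = {x \<in> carrier G. x [^] d = \<one>}"
  proof (rule card_seteq)
    show "finite {x \<in> carrier G. x [^] d = \<one>}" using fin by simp
    show "(\<lambda>k. a [^] k) ` {1..d} \<subseteq> {x \<in> carrier G. x [^] d = \<one>}"
    proof (rule image_subsetI)
      fix k :: nat
      have "(a [^] k) [^] d = (a [^] d) [^] k" using a(1) by (metis nat_pow_pow mult.commute)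
      then show "a [^] k \<in> {x \<in> carrier G. x [^] d = \<one>}"
        using a pow_ord_eq_1[OF a(1)] by auto
    qed
    show "card {x \<in> carrier G. x [^] d = \<one>} \<le> card ((\<lambda>k. a [^] k) ` {1..d})"
      using roots ord_inj'[OF a(1)] a(2) by (simp add: card_image)
  qed
  have "{x \<in> carrier G. ord x = d} = (\<lambda>k. a [^] k) ` {k \<in> {1..d}. ord (a [^] k) = d}"
    (is "?L = ?R")
  proof
    show "?L \<subseteq> ?R"
    proof
      fix x assume x: "x \<in> ?L"
      then have "x \<in> (\<lambda>k. a [^] k) ` {1..d}" using powers by auto
      then show "x \<in> ?R" using x by auto
    qed
    show "?R \<subseteq> ?L" using a(1) by auto
  qed
  also have "card \<dots> = card {k \<in> {1..d}. ord (a [^] k) = d}"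
    using a(2) by (intro card_image inj_on_subset[OF ord_inj'[OF a(1)]]) auto
  also have "\<dots> = phi' d"
    using pow_ord_eq_ord_iff[OF fin a(1)] a(2) by (simp add: phi'_def)
  finally show ?thesis .
qed

lemma cyclic_group_if_card_roots_le:
  assumes fin: "finite (carrier G)"
    and roots: "\<And>d. d > 0 \<Longrightarrow> card {x \<in> carrier G. x [^] d = \<one>} \<le> d"
  shows "cyclic_group G"
proof -
  let ?D = "{d. d dvd order G}" and ?N = "\<lambda>d. card {x \<in> carrier G. ord x = d}"
  have order_pos: "order G > 0" using fin by (simp add: order_gt_0_iff_finite)
  then have finD: "finite ?D" by simp
  have N_le: "?N d \<le> phi' d" if "d \<in> ?D" for d
  proof (cases "\<exists>a \<in> carrier G. ord a = d")
    case True
    then obtain a where "a \<in> carrier G" "ord a = d" by blast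
    moreover have "d > 0" using that order_pos by (auto intro: dvd_pos_nat)
    ultimately show ?thesis using card_ord_eq_phi'_if_card_roots_le fin roots by simp
  next
    case False
    then have "{x \<in> carrier G. ord x = d} = {}" by auto
    then show ?thesis by (metis card.empty zero_le)
  qed
  have "sum ?N ?D = card (\<Union>d \<in> ?D. {x \<in> carrier G. ord x = d})"
    using finD fin by (subst card_UN_disjoint) auto
  also have "(\<Union>d \<in> ?D. {x \<in> carrier G. ord x = d}) = carrier G"
    using ord_dvd_group_order by auto
  also have "card (carrier G) = sum phi' ?D"
    using sum_phi'_factors[OF order_pos] by (simp add: order_def)
  finally have "?N (order G) = phi' (order G)"
    using sum_mono_inv[OF _ N_le _ finD, where i = "order G"] by simp
  then have "{x \<in> carrier G. ord x = order G} \<noteq> {}"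
    using phi'_nonzero[OF order_pos] by (metis card.empty less_irrefl)
  then obtain a where a: "a \<in> carrier G" "ord a = order G" by blast
  have "generate G {a} = carrier G"
    using generate_pow_card[OF a(1)] a(2) fin generate_incl[of "{a}"] a(1)
    by (intro card_subset_eq) (auto simp: order_def)
  then have "carrier G = range (\<lambda>k::int. a [^] k)"
    using generate_pow[OF a(1)] by (simp add: full_SetCompr_eq)
  then show ?thesis
    using a(1) cyclic_group by blast
qed

end

lemma Kstar_simps [simp]:
  "carrier (Kstar::'a::field monoid) = UNIV - {0}"
  "monoid.mult (Kstar::'a::field monoid) = (*)"
  "one (Kstar::'a::field monoid) = 1"
  by (simp_all add: Kstar_def)

lemma group_Kstar: "group (Kstar::'a::field monoid)"
proof (rule groupI)
  fix x :: 'a assume "x \<in> carrier Kstar"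
  then show "\<exists>y\<in>carrier Kstar. y \<otimes>\<^bsub>Kstar\<^esub> x = \<one>\<^bsub>Kstar\<^esub>"
    by (intro bexI[of _ "inverse x"]) auto
qed (auto simp: mult.assoc)

lemma inv_Kstar: "(x::'a::field) \<noteq> 0 \<Longrightarrow> inv\<^bsub>Kstar\<^esub> x = inverse x"
  using group.inv_equality[OF group_Kstar, of "inverse x" x] by auto

lemma nat_pow_Kstar: "x [^]\<^bsub>(Kstar::'a::field monoid)\<lparr>carrier := H\<rparr>\<^esub> (n::nat) = x ^ n"
  by (induct n) (simp_all add: Kstar_def mult.commute)

lemma subgroup_Kstar_if_finite_mult_closed:
  fixes H :: "'a::field set"
  assumes fin: "finite H" and "0 \<notin> H" "1 \<in> H"
    and closed: "\<And>x y. x \<in> H \<Longrightarrow> y \<in> H \<Longrightarrow> x * y \<in> H"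
  shows "subgroup H (Kstar::'a monoid)"
proof
  show "H \<subseteq> carrier Kstar" "\<one>\<^bsub>Kstar\<^esub> \<in> H"
    "\<And>x y. x \<in> H \<Longrightarrow> y \<in> H \<Longrightarrow> x \<otimes>\<^bsub>Kstar\<^esub> y \<in> H"
    using assms by auto
  fix x assume x: "x \<in> H"
  then have x0: "x \<noteq> 0" using \<open>0 \<notin> H\<close> by auto
  have "(*) x ` H = H"
    using x0 fin closed[OF x] by (intro card_subset_eq) (auto simp: card_image inj_on_def)
  then obtain y where "y \<in> H" "x * y = 1" using \<open>1 \<in> H\<close> by (metis imageE)
  then have "inverse x \<in> H" using inverse_unique by metis
  then show "inv\<^bsub>Kstar\<^esub> x \<in> H" using inv_Kstar[OF x0] by simp
qed

lemma roots_of_unity_finite_card_le: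
  assumes "d > 0"
  shows "finite {x::'a::field. x ^ d = 1}" and "card {x::'a. x ^ d = 1} \<le> d"
proof -
  let ?p = "Polynomial.monom (1::'a) d - 1"
  have "poly ?p 0 \<noteq> 0" using assms by (simp add: poly_monom zero_power)
  then have "?p \<noteq> 0" by auto
  moreover have roots: "{x. x ^ d = 1} = {x. poly ?p x = 0}" by (simp add: poly_monom)
  moreover have "degree ?p \<le> d" by (intro degree_diff_le) (auto simp: degree_monom_le)
  ultimately show "finite {x::'a. x ^ d = 1}" "card {x::'a. x ^ d = 1} \<le> d"
    using poly_roots_finite[of ?p] card_poly_roots_bound[of ?p] by simp_all
qed

lemma cyclic_group_finite_subgroup_Kstar:
  fixes H :: "'a::field set"
  assumes "subgroup H (Kstar::'a monoid)" and "finite H"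
  shows "cyclic_group ((Kstar::'a monoid)\<lparr>carrier := H\<rparr>)"
proof -
  interpret H: group "(Kstar::'a monoid)\<lparr>carrier := H\<rparr>"
    using subgroup.subgroup_is_group[OF assms(1) group_Kstar] .
  show ?thesis
  proof (rule H.cyclic_group_if_card_roots_le)
    fix d :: nat assume "d > 0"
    have "card {x \<in> H. x ^ d = 1} \<le> card {x::'a. x ^ d = 1}"
      using roots_of_unity_finite_card_le(1)[OF \<open>d > 0\<close>] by (rule card_mono) auto
    then show "card {x \<in> carrier (Kstar\<lparr>carrier := H\<rparr>). x [^]\<^bsub>Kstar\<lparr>carrier := H\<rparr>\<^esub> d = \<one>\<^bsub>Kstar\<lparr>carrier := H\<rparr>\<^esub>} \<le> d"
      using roots_of_unity_finite_card_le(2)[OF \<open>d > 0\<close>, where 'a = 'a] by (simp add: nat_pow_Kstar)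
  qed (simp add: assms(2))
qed

lemma image_mult_eq_if_card_eq:
  fixes Y Z :: "'a::field set"
  assumes "finite Z" "card Y = card Z" "c \<noteq> 0" "(*) c ` Y \<subseteq> Z"
  shows "(*) c ` Y = Z"
  using assms by (intro card_subset_eq) (auto simp: card_image inj_on_def)

lemma mult_closed_sets_eq_cosets:
  fixes X Y Z :: "'a::field set"
  assumes fin: "finite X" "finite Y" "finite Z"
    and card: "card X = card Z" "card Y = card Z"
    and x0: "x0 \<in> X" and y0: "y0 \<in> Y" and nonzero: "0 \<notin> X" "0 \<notin> Y"
    and closed: "\<And>x y. x \<in> X \<Longrightarrow> y \<in> Y \<Longrightarrow> x * y \<in> Z"
  defines "H \<equiv> (\<lambda>x. x / x0) ` X"
  shows "subgroup H (Kstar::'a monoid)" "finite H"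
    and "X = (*) x0 ` H" "Y = (*) y0 ` H" "Z = (*) (x0 * y0) ` H"
proof -
  have "x0 \<noteq> 0" "y0 \<noteq> 0" using x0 y0 nonzero by auto
  have Z_x0: "Z = (*) x0 ` Y"
    using image_mult_eq_if_card_eq[OF fin(3) card(2) \<open>x0 \<noteq> 0\<close>] closed x0 by auto
  have Z_y0: "Z = (*) y0 ` X"
    using image_mult_eq_if_card_eq[OF fin(3) card(1) \<open>y0 \<noteq> 0\<close>] closed y0
    by (auto simp: mult.commute)
  show X: "X = (*) x0 ` H"
    unfolding H_def using \<open>x0 \<noteq> 0\<close> by (force simp: image_image)
  show Z: "Z = (*) (x0 * y0) ` H"
    unfolding Z_y0 X image_image by (simp add: ac_simps)
  show Y: "Y = (*) y0 ` H"
  proof -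
    have "(*) x0 ` Y = (*) x0 ` ((*) y0 ` H)"
      using Z_x0 Z by (simp add: image_image ac_simps)
    then show ?thesis
      using \<open>x0 \<noteq> 0\<close> by (auto dest: inj_image_eq_iff[THEN iffD1, rotated] simp: inj_on_def)
  qed
  show "finite H" unfolding H_def using fin(1) by simp
  show "subgroup H (Kstar::'a monoid)"
  proof (rule subgroup_Kstar_if_finite_mult_closed[OF \<open>finite H\<close>])
    show "0 \<notin> H" "1 \<in> H" unfolding H_def using nonzero(1) x0 \<open>x0 \<noteq> 0\<close> by force+
    fix a b assume "a \<in> H" "b \<in> H"
    then have "(x0 * a) * (y0 * b) \<in> Z" using X Y closed by blast
    then obtain c where "c \<in> H" "(x0 * a) * (y0 * b) = (x0 * y0) * c" using Z by auto
    then show "a * b \<in> H" using \<open>x0 \<noteq> 0\<close> \<open>y0 \<noteq> 0\<close> by (simp add: ac_simps)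
  qed
qed

definition cross3 :: "'a::field vec3 \<Rightarrow> 'a vec3 \<Rightarrow> 'a vec3" where
  "cross3 u v = (case u of (a1, a2, a3) \<Rightarrow> case v of (b1, b2, b3) \<Rightarrow>
     (a2 * b3 - a3 * b2, a3 * b1 - a1 * b3, a1 * b2 - a2 * b1))"

definition det3 :: "'a::field vec3 \<Rightarrow> 'a vec3 \<Rightarrow> 'a vec3 \<Rightarrow> 'a" where
  "det3 p q r = dot3 p (cross3 q r)"

definition proj_rep :: "'a::field vec3 set \<Rightarrow> 'a vec3" where
  "proj_rep P = (SOME v. v \<noteq> (0, 0, 0) \<and> P = ppoint v)"

lemma smult3_smult3: "smult3 c (smult3 d v) = smult3 (c * d) v"
  by (cases v) (simp add: smult3_def mult.assoc)

lemma dot3_smult3: "dot3 a (smult3 c v) = c * dot3 a v"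
  by (cases v; cases a) (simp add: smult3_def dot3_def algebra_simps)

lemma dot3_commute: "dot3 a v = dot3 v (a::'a::field vec3)"
  by (cases a; cases v) (simp add: dot3_def algebra_simps)

lemma dot3_cross3_left: "dot3 (cross3 p q) p = (0::'a::field)"
  by (cases p; cases q) (simp add: dot3_def cross3_def algebra_simps)

lemma dot3_cross3_right: "dot3 (cross3 p q) q = (0::'a::field)"
  by (cases p; cases q) (simp add: dot3_def cross3_def algebra_simps)

lemma dot3_cross3: "dot3 (cross3 p q) r = (det3 p q r::'a::field)"
  by (cases p; cases q; cases r) (simp add: det3_def dot3_def cross3_def algebra_simps)

lemma det3_swap12: "det3 q p r = - det3 p q (r::'a::field vec3)"
  by (cases p; cases q; cases r) (simp add: det3_def dot3_def cross3_def algebra_simps)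

lemma det3_swap23: "det3 p r q = - det3 p q (r::'a::field vec3)"
  by (cases p; cases q; cases r) (simp add: det3_def dot3_def cross3_def algebra_simps)

lemma det3_rotate: "det3 r p q = det3 p q (r::'a::field vec3)"
  by (cases p; cases q; cases r) (simp add: det3_def dot3_def cross3_def algebra_simps)

lemma smult3_eq_if_cross3_eq_0:
  fixes p q :: "'a::field vec3"
  assumes "p \<noteq> (0, 0, 0)" and "q \<noteq> (0, 0, 0)" and "cross3 p q = (0, 0, 0)"
  shows "\<exists>c. c \<noteq> 0 \<and> q = smult3 c p"
proof -
  obtain p1 p2 p3 q1 q2 q3 where pq: "p = (p1, p2, p3)" "q = (q1, q2, q3)"
    by (cases p; cases q)
  have e: "p2 * q3 = p3 * q2" "p3 * q1 = p1 * q3" "p1 * q2 = p2 * q1"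
    using assms(3) by (auto simp: pq cross3_def)
  have "\<exists>c. q = smult3 c p"
  proof -
    consider "p1 \<noteq> 0" | "p2 \<noteq> 0" | "p3 \<noteq> 0" using assms(1) pq by auto
    then show ?thesis
    proof cases
      case 1 with e show ?thesis by (auto simp: pq smult3_def field_simps intro!: exI[of _ "q1 / p1"])
    next
      case 2 with e show ?thesis by (auto simp: pq smult3_def field_simps intro!: exI[of _ "q2 / p2"])
    next
      case 3 with e show ?thesis by (auto simp: pq smult3_def field_simps intro!: exI[of _ "q3 / p3"])
    qed
  qed
  then show ?thesis using assms(2) by (auto simp: smult3_def pq)
qed

lemma det3_eq_0_if_common_kernel:
  fixes b p q r :: "'a::field vec3"
  assumes "b \<noteq> (0, 0, 0)" and "dot3 b p = 0" "dot3 b q = 0" "dot3 b r = 0"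
  shows "det3 p q r = 0"
proof -
  obtain b1 b2 b3 p1 p2 p3 q1 q2 q3 r1 r2 r3 where
    v: "b = (b1, b2, b3)" "p = (p1, p2, p3)" "q = (q1, q2, q3)" "r = (r1, r2, r3)"
    by (cases b; cases p; cases q; cases r)
  let ?D = "det3 p q r"
  have D: "?D = p1 * (q2 * r3 - q3 * r2) + p2 * (q3 * r1 - q1 * r3) + p3 * (q1 * r2 - q2 * r1)"
    by (simp add: det3_def dot3_def cross3_def v)
  have h: "b1 * p1 + b2 * p2 + b3 * p3 = 0" "b1 * q1 + b2 * q2 + b3 * q3 = 0"
    "b1 * r1 + b2 * r2 + b3 * r3 = 0"
    using assms(2-4) by (simp_all add: dot3_def v)
  have "?D * b1 = (b1 * p1 + b2 * p2 + b3 * p3) * (q2 * r3 - q3 * r2)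
      + (b1 * q1 + b2 * q2 + b3 * q3) * (r2 * p3 - r3 * p2) + (b1 * r1 + b2 * r2 + b3 * r3) * (p2 * q3 - p3 * q2)"
    "?D * b2 = (b1 * p1 + b2 * p2 + b3 * p3) * (q3 * r1 - q1 * r3)
      + (b1 * q1 + b2 * q2 + b3 * q3) * (r3 * p1 - r1 * p3) + (b1 * r1 + b2 * r2 + b3 * r3) * (p3 * q1 - p1 * q3)"
    "?D * b3 = (b1 * p1 + b2 * p2 + b3 * p3) * (q1 * r2 - q2 * r1)
      + (b1 * q1 + b2 * q2 + b3 * q3) * (r1 * p2 - r2 * p1) + (b1 * r1 + b2 * r2 + b3 * r3) * (p1 * q2 - p2 * q1)"
    unfolding D by (simp_all add: algebra_simps)
  then have "?D * b1 = 0" "?D * b2 = 0" "?D * b3 = 0" using h by simp_all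
  then show ?thesis using assms(1) v by auto
qed

lemma in_ppoint: "v \<in> ppoint (v::'a::field vec3)"
  unfolding ppoint_def by (rule CollectI, rule exI[of _ 1]) (cases v, simp add: smult3_def)

lemma ppoint_smult3:
  assumes "(c::'a::field) \<noteq> 0"
  shows "ppoint (smult3 c v) = ppoint v"
proof
  show "ppoint (smult3 c v) \<subseteq> ppoint v"
    unfolding ppoint_def using assms by (auto simp: smult3_smult3)
  show "ppoint v \<subseteq> ppoint (smult3 c v)"
  proof
    fix w assume "w \<in> ppoint v"
    then obtain d where "d \<noteq> 0" "w = smult3 d v" unfolding ppoint_def by auto
    then have "d / c \<noteq> 0" "w = smult3 (d / c) (smult3 c v)" using assms by (simp_all add: smult3_smult3)
    then show "w \<in> ppoint (smult3 c v)" unfolding ppoint_def by blast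
  qed
qed

lemma ppoint_in_PG2: "v \<noteq> (0, 0, 0) \<Longrightarrow> ppoint v \<in> PG2"
  unfolding PG2_def by blast

lemma proj_rep:
  assumes "P \<in> PG2"
  shows "proj_rep P \<noteq> (0, 0, 0)" and "ppoint (proj_rep P) = P"
proof -
  have "\<exists>v. v \<noteq> (0, 0, 0) \<and> P = ppoint v" using assms unfolding PG2_def by auto
  then have "proj_rep P \<noteq> (0, 0, 0) \<and> P = ppoint (proj_rep P)"
    unfolding proj_rep_def by (rule someI_ex)
  then show "proj_rep P \<noteq> (0, 0, 0)" "ppoint (proj_rep P) = P" by auto
qed

lemma ppoint_in_pline_iff:
  assumes "v \<noteq> (0, 0, 0)"
  shows "ppoint v \<in> pline a \<longleftrightarrow> dot3 a v = 0"
proof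
  show "ppoint v \<in> pline a \<Longrightarrow> dot3 a v = 0"
    using in_ppoint unfolding pline_def by blast
  show "dot3 a v = 0 \<Longrightarrow> ppoint v \<in> pline a"
    using ppoint_in_PG2[OF assms] unfolding pline_def ppoint_def by (auto simp: dot3_smult3)
qed

lemma in_pline_iff: "P \<in> PG2 \<Longrightarrow> P \<in> pline a \<longleftrightarrow> dot3 a (proj_rep P) = 0"
  by (metis proj_rep ppoint_in_pline_iff)

lemma dot3_proj_rep_if_in_pline_diff:
  assumes "P \<in> pline a - (pline b \<union> pline c)"
  shows "dot3 a (proj_rep P) = 0" "dot3 b (proj_rep P) \<noteq> 0" "dot3 c (proj_rep P) \<noteq> 0"
proof -
  have "P \<in> PG2" using assms unfolding pline_def by blast
  then show "dot3 a (proj_rep P) = 0" "dot3 b (proj_rep P) \<noteq> 0" "dot3 c (proj_rep P) \<noteq> 0"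
    using assms by (simp_all add: in_pline_iff)
qed

lemma pline_eq_if_cross3_eq_0:
  assumes "a \<noteq> (0, 0, 0)" and "b \<noteq> (0, 0, 0)" and "cross3 a b = (0, 0, (0::'a::field))"
  shows "pline a = pline b"
proof -
  obtain c where "c \<noteq> 0" "b = smult3 c a" using smult3_eq_if_cross3_eq_0[OF assms] by blast
  then have "dot3 b v = 0 \<longleftrightarrow> dot3 a v = 0" for v
    by (simp add: dot3_commute[of _ v] dot3_smult3)
  then show ?thesis unfolding pline_def by simp
qed

lemma collinear3_iff_det3:
  assumes P: "P \<in> PG2" and Q: "Q \<in> PG2" and R: "R \<in> PG2" and "P \<noteq> Q"
  shows "collinear3 P Q R \<longleftrightarrow> det3 (proj_rep P) (proj_rep Q) (proj_rep R) = 0"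
proof
  assume "collinear3 P Q R"
  then obtain b where "b \<noteq> (0, 0, 0)" "P \<in> pline b" "Q \<in> pline b" "R \<in> pline b"
    unfolding collinear3_def Lines_def by auto
  then show "det3 (proj_rep P) (proj_rep Q) (proj_rep R) = 0"
    using P Q R by (intro det3_eq_0_if_common_kernel) (simp_all add: in_pline_iff)
next
  assume det: "det3 (proj_rep P) (proj_rep Q) (proj_rep R) = 0"
  define b where "b = cross3 (proj_rep P) (proj_rep Q)"
  have "b \<noteq> (0, 0, 0)"
  proof
    assume "b = (0, 0, 0)"
    then obtain c where "c \<noteq> 0" "proj_rep Q = smult3 c (proj_rep P)"
      using smult3_eq_if_cross3_eq_0 proj_rep(1) P Q b_def by metis
    then have "Q = P" using proj_rep(2) P Q ppoint_smult3 by metis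
    then show False using \<open>P \<noteq> Q\<close> by simp
  qed
  then have "pline b \<in> Lines" unfolding Lines_def by blast
  moreover have "P \<in> pline b" "Q \<in> pline b" "R \<in> pline b"
    using det P Q R unfolding b_def
    by (simp_all add: in_pline_iff dot3_cross3_left dot3_cross3_right dot3_cross3)
  ultimately show "collinear3 P Q R" unfolding collinear3_def by (intro bexI[of _ "pline b"]) auto
qed

lemma ex_line_through:
  assumes "P \<in> PG2" and "Q \<in> PG2" and "P \<noteq> Q"
  shows "\<exists>l\<in>Lines. P \<in> l \<and> Q \<in> l"
proof -
  have "det3 (proj_rep P) (proj_rep Q) (proj_rep P) = 0"
    by (metis dot3_cross3 dot3_cross3_left)
  then have "collinear3 P Q P" using collinear3_iff_det3[OF assms(1,2,1,3)] by simp
  then show ?thesis unfolding collinear3_def by blast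
qed

lemma det3_ne_0_if_triangle:
  fixes a1 a2 a3 :: "'a::field vec3"
  assumes "a1 \<noteq> (0, 0, 0)" "a2 \<noteq> (0, 0, 0)"
    and "pline a1 \<noteq> pline a2" and "pline a1 \<inter> pline a2 \<inter> pline a3 = {}"
  shows "det3 a1 a2 a3 \<noteq> 0"
proof
  assume det: "det3 a1 a2 a3 = 0"
  define w where "w = cross3 a1 a2"
  have "w \<noteq> (0, 0, 0)" using pline_eq_if_cross3_eq_0 assms(1-3) w_def by metis
  moreover have "dot3 a1 w = 0" "dot3 a2 w = 0" "dot3 a3 w = 0"
    using det unfolding w_def
    by (simp_all add: dot3_commute[of _ "cross3 a1 a2"] dot3_cross3_left dot3_cross3_right dot3_cross3)
  ultimately have "ppoint w \<in> pline a1 \<inter> pline a2 \<inter> pline a3"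
    using ppoint_in_pline_iff by blast
  then show False using assms(4) by blast
qed

lemma det3_dot3_rows:
  "det3 (dot3 a1 p, dot3 a2 p, dot3 a3 p) (dot3 a1 q, dot3 a2 q, dot3 a3 q)
     (dot3 a1 r, dot3 a2 r, dot3 a3 r) = det3 a1 a2 a3 * det3 p q (r::'a::field vec3)"
  by (cases a1; cases a2; cases a3; cases p; cases q; cases r)
    (simp add: det3_def dot3_def cross3_def algebra_simps)

lemma eq_smult3_if_dot3_eq:
  fixes a1 a2 a3 v w :: "'a::field vec3"
  assumes "det3 a1 a2 a3 \<noteq> 0"
    and "dot3 a1 v = c * dot3 a1 w" "dot3 a2 v = c * dot3 a2 w" "dot3 a3 v = c * dot3 a3 w"
  shows "v = smult3 c w"
proof (rule ccontr)
  obtain v1 v2 v3 w1 w2 w3 where vw: "v = (v1, v2, v3)" "w = (w1, w2, w3)"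
    by (cases v; cases w)
  define b where "b = (v1 - c * w1, v2 - c * w2, v3 - c * w3)"
  assume "v \<noteq> smult3 c w"
  then have "b \<noteq> (0, 0, 0)" unfolding b_def vw smult3_def by auto
  moreover have "dot3 b a1 = 0" "dot3 b a2 = 0" "dot3 b a3 = 0"
    using assms(2-4) unfolding b_def vw
    by (cases a1; cases a2; cases a3; simp add: dot3_def algebra_simps)+
  ultimately show False using det3_eq_0_if_common_kernel assms(1) by blast
qed

lemma inj_on_side_ratio:
  fixes b0 b1 b2 :: "'a::field vec3"
  assumes det: "det3 b0 b1 b2 \<noteq> 0" and "A \<subseteq> PG2"
    and on_b0: "\<And>P. P \<in> A \<Longrightarrow> dot3 b0 (proj_rep P) = 0"
    and off_b2: "\<And>P. P \<in> A \<Longrightarrow> dot3 b2 (proj_rep P) \<noteq> 0"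
  shows "inj_on (\<lambda>P. dot3 b1 (proj_rep P) / dot3 b2 (proj_rep P)) A"
proof (rule inj_onI)
  fix P P' assume P: "P \<in> A" and P': "P' \<in> A"
    and ratio: "dot3 b1 (proj_rep P) / dot3 b2 (proj_rep P) = dot3 b1 (proj_rep P') / dot3 b2 (proj_rep P')"
  define c where "c = dot3 b2 (proj_rep P') / dot3 b2 (proj_rep P)"
  have "c \<noteq> 0" using off_b2 P P' c_def by simp
  have "dot3 b0 (proj_rep P') = c * dot3 b0 (proj_rep P)"
    "dot3 b1 (proj_rep P') = c * dot3 b1 (proj_rep P)"
    "dot3 b2 (proj_rep P') = c * dot3 b2 (proj_rep P)"
    using on_b0[OF P] on_b0[OF P'] off_b2[OF P] off_b2[OF P'] ratio unfolding c_def
    by (simp_all add: field_simps)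
  then have "proj_rep P' = smult3 c (proj_rep P)"
    by (intro eq_smult3_if_dot3_eq[OF det])
  then show "P = P'"
    using proj_rep(2) P P' \<open>A \<subseteq> PG2\<close> ppoint_smult3[OF \<open>c \<noteq> 0\<close>] by (metis subsetD)
qed

lemma det3_side_points_eq_0_iff:
  fixes y1 z1 x2 z2 x3 y3 :: "'a::field"
  assumes "y1 \<noteq> 0" "z2 \<noteq> 0" "y3 \<noteq> 0"
  shows "det3 (0, y1, z1) (x2, 0, z2) (x3, y3, 0) = 0 \<longleftrightarrow> (z1 / y1) * (x2 / z2) = - (x3 / y3)"
  using assms by (simp add: det3_def dot3_def cross3_def field_simps)
    (metis eq_neg_iff_add_eq_0)

lemma collinear3_iff_side_ratios:
  fixes a1 a2 a3 :: "'a::field vec3"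
  assumes det: "det3 a1 a2 a3 \<noteq> 0" and PG2: "P \<in> PG2" "Q \<in> PG2" "R \<in> PG2" "P \<noteq> Q"
    and on: "dot3 a1 (proj_rep P) = 0" "dot3 a2 (proj_rep Q) = 0" "dot3 a3 (proj_rep R) = 0"
    and off: "dot3 a2 (proj_rep P) \<noteq> 0" "dot3 a3 (proj_rep Q) \<noteq> 0" "dot3 a2 (proj_rep R) \<noteq> 0"
  shows "collinear3 P Q R \<longleftrightarrow>
    (dot3 a3 (proj_rep P) / dot3 a2 (proj_rep P)) * (dot3 a1 (proj_rep Q) / dot3 a3 (proj_rep Q)) =
    - (dot3 a1 (proj_rep R) / dot3 a2 (proj_rep R))"
proof -
  let ?x = "\<lambda>P. dot3 a1 (proj_rep P)" and ?y = "\<lambda>P. dot3 a2 (proj_rep P)"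
    and ?z = "\<lambda>P. dot3 a3 (proj_rep P)"
  have rows: "det3 (0, ?y P, ?z P) (?x Q, 0, ?z Q) (?x R, ?y R, 0) =
      det3 a1 a2 a3 * det3 (proj_rep P) (proj_rep Q) (proj_rep R)"
    using det3_dot3_rows[of a1 "proj_rep P" a2 a3 "proj_rep Q" "proj_rep R"] on by simp
  have "collinear3 P Q R \<longleftrightarrow> det3 (proj_rep P) (proj_rep Q) (proj_rep R) = 0"
    using collinear3_iff_det3 PG2 by blast
  also have "\<dots> \<longleftrightarrow> det3 (0, ?y P, ?z P) (?x Q, 0, ?z Q) (?x R, ?y R, 0) = 0"
    using rows det by simp
  also have "\<dots> \<longleftrightarrow> (?z P / ?y P) * (?x Q / ?z Q) = - (?x R / ?y R)"
    using off by (rule det3_side_points_eq_0_iff)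
  finally show ?thesis .
qed

lemma dual_3net_components:
  assumes "dual_3net L1 L2 L3 n"
  shows "L1 \<subseteq> PG2" "L2 \<subseteq> PG2" "L3 \<subseteq> PG2" "finite L1" "finite L2" "finite L3"
    "card L1 = n" "card L2 = n" "card L3 = n" "L1 \<inter> L2 = {}" "L1 \<inter> L3 = {}" "L2 \<inter> L3 = {}"
proof -
  have comp: "\<forall>i < 3. [L1, L2, L3] ! i \<subseteq> PG2 \<and> finite ([L1, L2, L3] ! i) \<and> card ([L1, L2, L3] ! i) = n"
    and disj: "\<forall>i < 3. \<forall>j < 3. i \<noteq> j \<longrightarrow> [L1, L2, L3] ! i \<inter> [L1, L2, L3] ! j = {}"
    using assms unfolding dual_3net_def Let_def by blast+
  show "L1 \<subseteq> PG2" "finite L1" "card L1 = n" using comp[rule_format, of 0] by simp_all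
  show "L2 \<subseteq> PG2" "finite L2" "card L2 = n" using comp[rule_format, of 1] by simp_all
  show "L3 \<subseteq> PG2" "finite L3" "card L3 = n" using comp[rule_format, of 2] by simp_all
  show "L1 \<inter> L2 = {}" "L1 \<inter> L3 = {}" "L2 \<inter> L3 = {}"
    using disj[rule_format, of 0 1] disj[rule_format, of 0 2] disj[rule_format, of 1 2] by simp_all
qed

lemma dual_3net_unique_point:
  assumes "dual_3net L1 L2 L3 n" "l \<in> Lines" "i < 3" "j < 3" "k < 3" "i \<noteq> j"
    "l \<inter> [L1, L2, L3] ! i \<noteq> {}" "l \<inter> [L1, L2, L3] ! j \<noteq> {}"
  shows "\<exists>!P. P \<in> l \<inter> [L1, L2, L3] ! k"
proof -
  have "\<forall>l \<in> Lines. \<forall>i < 3. \<forall>j < 3. i \<noteq> j \<and> l \<inter> [L1, L2, L3] ! i \<noteq> {} \<and>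
      l \<inter> [L1, L2, L3] ! j \<noteq> {} \<longrightarrow> (\<forall>k < 3. \<exists>!P. P \<in> l \<inter> [L1, L2, L3] ! k)"
    using assms(1) unfolding dual_3net_def Let_def by (elim conjE)
  then show ?thesis using assms(2-) by simp
qed

lemma dual_3net_line_through_component:
  assumes net: "dual_3net L1 L2 L3 n" and "n \<ge> 2" and "l \<in> Lines"
    and "i < 3" "j < 3" "i \<noteq> j" and sub: "[L1, L2, L3] ! j \<subseteq> l"
  shows "l \<inter> [L1, L2, L3] ! i = {}"
proof (rule ccontr)
  assume meets_i: "l \<inter> [L1, L2, L3] ! i \<noteq> {}"
  have card: "card ([L1, L2, L3] ! j) = n"
    using dual_3net_components(7-9)[OF net] \<open>j < 3\<close> by (auto simp: numeral_3_eq_3 less_Suc_eq)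
  then have "l \<inter> [L1, L2, L3] ! j = [L1, L2, L3] ! j" "[L1, L2, L3] ! j \<noteq> {}"
    using sub \<open>n \<ge> 2\<close> by auto
  then have "\<exists>!P. P \<in> [L1, L2, L3] ! j"
    using dual_3net_unique_point[OF net \<open>l \<in> Lines\<close> \<open>i < 3\<close> \<open>j < 3\<close> \<open>j < 3\<close> \<open>i \<noteq> j\<close> meets_i]
    by simp
  then obtain P where "[L1, L2, L3] ! j = {P}" by auto
  then show False using card \<open>n \<ge> 2\<close> by simp
qed

lemma dual_3net_third_point:
  assumes net: "dual_3net L1 L2 L3 n" and "P \<in> L1" "Q \<in> L2"
  shows "\<exists>R\<in>L3. collinear3 P Q R"
proof -
  have "P \<noteq> Q" using assms dual_3net_components(10)[OF net] by blast
  then obtain l where l: "l \<in> Lines" "P \<in> l" "Q \<in> l"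
    using ex_line_through dual_3net_components(1,2)[OF net] assms(2,3) by blast
  then have "\<exists>!R. R \<in> l \<inter> [L1, L2, L3] ! 2"
    using assms by (intro dual_3net_unique_point[OF net l(1), of 0 1]) auto
  then obtain R where "R \<in> l" "R \<in> L3" by auto
  then show ?thesis unfolding collinear3_def using l by blast
qed

lemma triangular_dual_3net_sides:
  assumes "triangular_dual_3net L1 L2 L3 n"
  obtains a1 a2 a3 :: "'a::field vec3" where "det3 a1 a2 a3 \<noteq> 0"
    "L1 \<subseteq> pline a1 - (pline a2 \<union> pline a3)"
    "L2 \<subseteq> pline a2 - (pline a1 \<union> pline a3)"
    "L3 \<subseteq> pline a3 - (pline a1 \<union> pline a2)"
proof -
  have net: "dual_3net L1 L2 L3 n" and "n \<ge> 2"
    using assms unfolding triangular_dual_3net_def by auto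
  obtain l1 l2 l3 where l: "l1 \<in> Lines" "l2 \<in> Lines" "l3 \<in> Lines" "l1 \<noteq> l2"
    "l1 \<inter> l2 \<inter> l3 = {}" and sub: "L1 \<subseteq> l1" "L2 \<subseteq> l2" "L3 \<subseteq> l3"
    using assms unfolding triangular_dual_3net_def by blast
  obtain a1 a2 a3 where a: "a1 \<noteq> (0, 0, 0)" "a2 \<noteq> (0, 0, 0)" "l1 = pline a1" "l2 = pline a2" "l3 = pline a3"
    using l(1-3) unfolding Lines_def by blast
  have avoid: "l \<inter> [L1, L2, L3] ! i = {}" if "l \<in> Lines" "[L1, L2, L3] ! j \<subseteq> l" "i < 3" "j < 3" "i \<noteq> j" for l i j
    using dual_3net_line_through_component[OF net \<open>n \<ge> 2\<close>] that by blast
  have "l2 \<inter> L1 = {}" "l3 \<inter> L1 = {}" "l1 \<inter> L2 = {}" "l3 \<inter> L2 = {}" "l1 \<inter> L3 = {}" "l2 \<inter> L3 = {}"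
    using avoid[OF l(2), of 1 0] avoid[OF l(3), of 2 0] avoid[OF l(1), of 0 1]
      avoid[OF l(3), of 2 1] avoid[OF l(1), of 0 2] avoid[OF l(2), of 1 2] sub by simp_all
  then have sides: "L1 \<subseteq> pline a1 - (pline a2 \<union> pline a3)" "L2 \<subseteq> pline a2 - (pline a1 \<union> pline a3)"
    "L3 \<subseteq> pline a3 - (pline a1 \<union> pline a2)"
    using sub unfolding a(3-5) by blast+
  have "pline a1 \<noteq> pline a2" "pline a1 \<inter> pline a2 \<inter> pline a3 = {}"
    using l(4,5) unfolding a(3-5) by simp_all
  then have "det3 a1 a2 a3 \<noteq> 0" by (rule det3_ne_0_if_triangle[OF a(1,2)])
  then show ?thesis using sides by (rule that)
qed

lemma triangular_dual_3net_coordinates: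
  fixes L1 L2 L3 :: "'a::field vec3 set set"
  assumes tri: "triangular_dual_3net L1 L2 L3 n"
  obtains f1 f2 f3 :: "'a vec3 set \<Rightarrow> 'a"
  where "inj_on f1 L1" "inj_on f2 L2" "inj_on f3 L3" "0 \<notin> f1 ` L1" "0 \<notin> f2 ` L2"
    "\<And>P Q R. P \<in> L1 \<Longrightarrow> Q \<in> L2 \<Longrightarrow> R \<in> L3 \<Longrightarrow> collinear3 P Q R \<longleftrightarrow> f1 P * f2 Q = f3 R"
proof -
  obtain a1 a2 a3 :: "'a vec3" where det: "det3 a1 a2 a3 \<noteq> 0"
    and sides: "L1 \<subseteq> pline a1 - (pline a2 \<union> pline a3)" "L2 \<subseteq> pline a2 - (pline a1 \<union> pline a3)"
      "L3 \<subseteq> pline a3 - (pline a1 \<union> pline a2)"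
    using triangular_dual_3net_sides[OF tri] by blast
  have net: "dual_3net L1 L2 L3 n" using tri unfolding triangular_dual_3net_def by simp
  note PG2 = dual_3net_components(1-3)[OF net]
  define x y z where "x P = dot3 a1 (proj_rep P)" and "y P = dot3 a2 (proj_rep P)"
    and "z P = dot3 a3 (proj_rep P)" for P
  have L1: "x P = 0" "y P \<noteq> 0" "z P \<noteq> 0" if "P \<in> L1" for P
    using dot3_proj_rep_if_in_pline_diff[of P a1 a2 a3] that sides(1)
    unfolding x_def y_def z_def by auto
  have L2: "y Q = 0" "x Q \<noteq> 0" "z Q \<noteq> 0" if "Q \<in> L2" for Q
    using dot3_proj_rep_if_in_pline_diff[of Q a2 a1 a3] that sides(2)
    unfolding x_def y_def z_def by auto
  have L3: "z R = 0" "x R \<noteq> 0" "y R \<noteq> 0" if "R \<in> L3" for R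
    using dot3_proj_rep_if_in_pline_diff[of R a3 a1 a2] that sides(3)
    unfolding x_def y_def z_def by auto
  show ?thesis
  proof
    show "inj_on (\<lambda>P. z P / y P) L1"
      using det3_swap23[where p = a1 and q = a2 and r = a3] det PG2(1) L1 unfolding x_def y_def z_def
      by (intro inj_on_side_ratio[of a1 a3 a2]) auto
    show "inj_on (\<lambda>Q. x Q / z Q) L2"
      using det3_swap12[where p = a1 and q = a2 and r = a3] det PG2(2) L2 unfolding x_def y_def z_def
      by (intro inj_on_side_ratio[of a2 a1 a3]) auto
    have "inj_on (\<lambda>R. x R / y R) L3"
      using det3_rotate[where p = a1 and q = a2 and r = a3] det PG2(3) L3 unfolding x_def y_def z_def
      by (intro inj_on_side_ratio[of a3 a1 a2]) auto
    then show "inj_on (\<lambda>R. - (x R / y R)) L3" by (simp add: inj_on_def)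
    show "0 \<notin> (\<lambda>P. z P / y P) ` L1" "0 \<notin> (\<lambda>Q. x Q / z Q) ` L2" using L1 L2 by auto
    fix P Q R assume P: "P \<in> L1" and Q: "Q \<in> L2" and R: "R \<in> L3"
    then have "P \<noteq> Q" using dual_3net_components(10)[OF net] by blast
    with P Q R show "collinear3 P Q R \<longleftrightarrow> z P / y P * (x Q / z Q) = - (x R / y R)"
      using PG2 L1[OF P] L2[OF Q] L3[OF R] unfolding x_def y_def z_def
      by (intro collinear3_iff_side_ratios[OF det]) blast+
  qed
qed

lemma bij_betw_inv_into_comp_mult:
  fixes f :: "'b \<Rightarrow> 'a::field"
  assumes inj: "inj_on f A" and image: "f ` A = (*) c ` H" and "c \<noteq> 0"
  shows "bij_betw (inv_into A f \<circ> (*) c) H A"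
    and "h \<in> H \<Longrightarrow> f ((inv_into A f \<circ> (*) c) h) = c * h"
proof -
  have "bij_betw ((*) c) H ((*) c ` H)" using \<open>c \<noteq> 0\<close> by (auto simp: bij_betw_def inj_on_def)
  moreover have "bij_betw (inv_into A f) ((*) c ` H) A"
    using bij_betw_inv_into[OF inj_on_imp_bij_betw[OF inj]] image by simp
  ultimately show "bij_betw (inv_into A f \<circ> (*) c) H A" by (rule bij_betw_trans)
  assume "h \<in> H"
  then have "c * h \<in> f ` A" using image by auto
  then show "f ((inv_into A f \<circ> (*) c) h) = c * h" by (simp add: f_inv_into_f)
qed

lemma realizes_if_coordinates_cosets:
  fixes L1 L2 L3 :: "'a::field vec3 set set" and f1 f2 f3 :: "'a vec3 set \<Rightarrow> 'a"
  assumes H: "subgroup H (Kstar::'a monoid)" and "x0 \<noteq> 0" "y0 \<noteq> 0"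
    and inj: "inj_on f1 L1" "inj_on f2 L2" "inj_on f3 L3"
    and image: "f1 ` L1 = (*) x0 ` H" "f2 ` L2 = (*) y0 ` H" "f3 ` L3 = (*) (x0 * y0) ` H"
    and coll: "\<And>P Q R. P \<in> L1 \<Longrightarrow> Q \<in> L2 \<Longrightarrow> R \<in> L3 \<Longrightarrow> collinear3 P Q R \<longleftrightarrow> f1 P * f2 Q = f3 R"
  shows "realizes L1 L2 L3 ((Kstar::'a monoid)\<lparr>carrier := H\<rparr>)"
proof -
  define \<alpha> \<beta> \<gamma> where "\<alpha> = inv_into L1 f1 \<circ> (*) x0" and "\<beta> = inv_into L2 f2 \<circ> (*) y0"
    and "\<gamma> = inv_into L3 f3 \<circ> (*) (x0 * y0)"
  have bij: "bij_betw \<alpha> H L1" "bij_betw \<beta> H L2" "bij_betw \<gamma> H L3"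
    and coords: "\<And>h. h \<in> H \<Longrightarrow> f1 (\<alpha> h) = x0 * h" "\<And>h. h \<in> H \<Longrightarrow> f2 (\<beta> h) = y0 * h"
      "\<And>h. h \<in> H \<Longrightarrow> f3 (\<gamma> h) = x0 * y0 * h"
    unfolding \<alpha>_def \<beta>_def \<gamma>_def
    using bij_betw_inv_into_comp_mult[OF inj(1) image(1)] bij_betw_inv_into_comp_mult[OF inj(2) image(2)]
      bij_betw_inv_into_comp_mult[OF inj(3) image(3)] \<open>x0 \<noteq> 0\<close> \<open>y0 \<noteq> 0\<close> by simp_all
  have "a * b = c \<longleftrightarrow> collinear3 (\<alpha> a) (\<beta> b) (\<gamma> c)" if "a \<in> H" "b \<in> H" "c \<in> H" for a b c
  proof -
    have "collinear3 (\<alpha> a) (\<beta> b) (\<gamma> c) \<longleftrightarrow> (x0 * a) * (y0 * b) = x0 * y0 * c"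
      using coll[of "\<alpha> a" "\<beta> b" "\<gamma> c"] coords that bij by (simp add: bij_betw_apply)
    also have "\<dots> \<longleftrightarrow> a * b = c" using \<open>x0 \<noteq> 0\<close> \<open>y0 \<noteq> 0\<close> by (simp add: ac_simps)
    finally show ?thesis by simp
  qed
  then show ?thesis
    unfolding realizes_def using subgroup.subgroup_is_group[OF H group_Kstar] bij by auto
qed

lemma realizes_subgroup_Kstar_if_coordinates:
  fixes L1 L2 L3 :: "'a::field vec3 set set" and f1 f2 f3 :: "'a vec3 set \<Rightarrow> 'a"
  assumes fin: "finite L1" "finite L2" "finite L3"
    and card: "card L1 = card L3" "card L2 = card L3" and "L1 \<noteq> {}" "L2 \<noteq> {}"
    and inj: "inj_on f1 L1" "inj_on f2 L2" "inj_on f3 L3"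
    and nonzero: "0 \<notin> f1 ` L1" "0 \<notin> f2 ` L2"
    and coll: "\<And>P Q R. P \<in> L1 \<Longrightarrow> Q \<in> L2 \<Longrightarrow> R \<in> L3 \<Longrightarrow> collinear3 P Q R \<longleftrightarrow> f1 P * f2 Q = f3 R"
    and third: "\<And>P Q. P \<in> L1 \<Longrightarrow> Q \<in> L2 \<Longrightarrow> \<exists>R\<in>L3. collinear3 P Q R"
  shows "\<exists>H. subgroup H (Kstar::'a monoid) \<and> finite H \<and> realizes L1 L2 L3 (Kstar\<lparr>carrier := H\<rparr>)"
proof -
  obtain x0 y0 where x0: "x0 \<in> f1 ` L1" and y0: "y0 \<in> f2 ` L2"
    using \<open>L1 \<noteq> {}\<close> \<open>L2 \<noteq> {}\<close> by blast
  then have "x0 \<noteq> 0" "y0 \<noteq> 0" using nonzero by auto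
  have closed: "x * y \<in> f3 ` L3" if x: "x \<in> f1 ` L1" and y: "y \<in> f2 ` L2" for x y
  proof -
    obtain P Q where "P \<in> L1" "Q \<in> L2" "x = f1 P" "y = f2 Q" using x y by blast
    moreover obtain R where "R \<in> L3" "collinear3 P Q R" using third[OF calculation(1,2)] by blast
    ultimately show ?thesis using coll by auto
  qed
  define H where "H = (\<lambda>x. x / x0) ` f1 ` L1"
  have "card (f1 ` L1) = card (f3 ` L3)" "card (f2 ` L2) = card (f3 ` L3)"
    using card inj by (simp_all add: card_image)
  note cosets = mult_closed_sets_eq_cosets[OF finite_imageI[OF fin(1)] finite_imageI[OF fin(2)]
      finite_imageI[OF fin(3)] this x0 y0 nonzero closed, folded H_def]
  have "realizes L1 L2 L3 ((Kstar::'a monoid)\<lparr>carrier := H\<rparr>)"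
    by (rule realizes_if_coordinates_cosets[OF cosets(1) \<open>x0 \<noteq> 0\<close> \<open>y0 \<noteq> 0\<close> inj cosets(3-5) coll])
  with cosets(1,2) show ?thesis by blast
qed

theorem proposition4p3:
  fixes L1 L2 L3 :: "'a::alg_closed_field vec3 set set" and n :: nat
  assumes "triangular_dual_3net L1 L2 L3 n"
  shows "\<exists>H. subgroup H (Kstar :: 'a monoid) \<and> finite H \<and>
           cyclic_group (Kstar\<lparr>carrier := H\<rparr>) \<and>
           realizes L1 L2 L3 (Kstar\<lparr>carrier := H\<rparr>)"
proof -
  have net: "dual_3net L1 L2 L3 n" and "n \<ge> 4"
    using assms unfolding triangular_dual_3net_def by auto
  note components = dual_3net_components[OF net]
  have "L1 \<noteq> {}" "L2 \<noteq> {}" using components(7,8) \<open>n \<ge> 4\<close> by auto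
  have "card L1 = card L3" "card L2 = card L3" using components(7-9) by simp_all
  moreover obtain f1 f2 f3 :: "'a vec3 set \<Rightarrow> 'a" where "inj_on f1 L1" "inj_on f2 L2" "inj_on f3 L3"
    "0 \<notin> f1 ` L1" "0 \<notin> f2 ` L2"
    "\<And>P Q R. P \<in> L1 \<Longrightarrow> Q \<in> L2 \<Longrightarrow> R \<in> L3 \<Longrightarrow> collinear3 P Q R \<longleftrightarrow> f1 P * f2 Q = f3 R"
    using triangular_dual_3net_coordinates[OF assms] by blast
  ultimately obtain H where "subgroup H (Kstar::'a monoid)" "finite H"
    "realizes L1 L2 L3 (Kstar\<lparr>carrier := H\<rparr>)"
    using realizes_subgroup_Kstar_if_coordinates[OF components(4-6)] \<open>L1 \<noteq> {}\<close> \<open>L2 \<noteq> {}\<close>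
      dual_3net_third_point[OF net] by blast
  then show ?thesis using cyclic_group_finite_subgroup_Kstar by blast
qed

end
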